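(* Let $R_0\subset\mathcal{D}_0\subset\mathbb{R}^2$ be a closed OU set about $(x_0,y_0)$ with $\lambda(R_0)\in(0,\infty)$, $R_0^X\in(0,\infty)$, $R_0^Y\in(0,\infty)$, written as $R_0=\{(x,y):y_0\le y\le h_0(x),\,x_0\le x\le x_0+R_0^X\}$ for a non-increasing left-continuous $h_0:[x_0,x_0+R_0^X]\to[y_0,y_0+R_0^Y]$ with $h_0(x_0)=y_0+R_0^Y$. Let rectangles $[x_{1i},x_{2i}]\times[y_{1i},y_{2i}]$, $i=1,\dots,n$, be given with $x_0\le x_{1i}\le x_{2i}\le\infty$, $y_0\le y_{1i}\le y_{2i}\le\infty$. Let $x_0<x_1<\cdots<x_{n_{R_0}}<x_{n_{R_0}+1}=x_0+R_0^X$ be the distinct values, sorted, among $x_0$, $x_0+R_0^X$ and those of the numbers $x_{1i}$, $x_{2i}$ (finite ones), $h_0^{-1}(y_{1i})$, $h_0^{-1}(y_{2i})$ (when well defined) that lie in $(x_0,x_0+R_0^X)$. Let $h:[x_0,x_0+R_0^X]\to[y_0,y_0+R_0^Y]$ satisfy: (a) $\int_{x_i}^{x_{i+1}}(h(x)-y_0)\,dx=\lambda(\{(x,y):x_i\le x\le x_{i+1},y\ge y_0\}\cap R_0)$ for $i=0,\dots,n_{R_0}$; (b) $h_0(x_{i+1})\le h(x)\le h_0(x_i+)$ for $x\in(x_i,x_{i+1}]$, $i=0,\dots,n_{R_0}$; (c) $h$ is non-increasing and left-continuous with $h(x_0)=h(x_0+)$. Define $R=\{(x,y):y_0\le y\le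 h(x),\,x_0\le x\le x_0+R_0^X\}$. Then $\lambda(R)=\lambda(R_0)$, $R^X\le R_0^X$, $R^Y\le R_0^Y$, and $\lambda([x_{1i},x_{2i}]\times[y_{1i},y_{2i}]\cap R)=\lambda([x_{1i},x_{2i}]\times[y_{1i},y_{2i}]\cap R_0)$ for all $i=1,\dots,n$.
   Context: Bivariate setting: $\mathcal{D}_0=[x_0,\infty)\times[y_0,\infty)$. A set $K\subset\mathcal{D}_0$ is OU about $(x_0,y_0)$ if $(x,y)\in K$, $x_0\le x'\le x$, $y_0\le y'\le y$ imply $(x',y')\in K$. For an OU set $K$: $K^X=\sup\{x:(x,y_0)\in K\}-x_0$ and $K^Y=\sup\{y:(x_0,y)\in K\}-y_0$. $\lambda$ is Lebesgue measure on $\mathbb{R}^2$. $h_0^{-1}(y)=\sup\{x:h_0(x)\ge y\}$, defined when $\{x:h_0(x)\ge y\}\ne\emptyset$. $h(x+)$ denotes the right limit. *)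

theory Defs
  imports "HOL-Analysis.Analysis"
begin

definition D0 :: "real \<Rightarrow> real \<Rightarrow> (real \<times> real) set" where
  "D0 x0 y0 = {x0..} \<times> {y0..}"

definition is_OU :: "real \<Rightarrow> real \<Rightarrow> (real \<times> real) set \<Rightarrow> bool" where
  "is_OU x0 y0 K \<longleftrightarrow> K \<subseteq> D0 x0 y0 \<and>
     (\<forall>x y x' y'. (x, y) \<in> K \<and> x0 \<le> x' \<and> x' \<le> x \<and> y0 \<le> y' \<and> y' \<le> y \<longrightarrow> (x', y') \<in> K)"

text \<open>K^X and K^Y (extended reals, since the supremum may be infinite).\<close>
definition OU_X :: "real \<Rightarrow> real \<Rightarrow> (real \<times> real) set \<Rightarrow> ereal" where
  "OU_X x0 y0 K = Sup (ereal ` {x. (x, y0) \<in> K}) - ereal x0"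

definition OU_Y :: "real \<Rightarrow> real \<Rightarrow> (real \<times> real) set \<Rightarrow> ereal" where
  "OU_Y x0 y0 K = Sup (ereal ` {y. (x0, y) \<in> K}) - ereal y0"

definition rect :: "real \<Rightarrow> ereal \<Rightarrow> real \<Rightarrow> ereal \<Rightarrow> (real \<times> real) set" where
  "rect x1 x2 y1 y2 = {(x, y). x1 \<le> x \<and> ereal x \<le> x2 \<and> y1 \<le> y \<and> ereal y \<le> y2}"

definition region :: "real \<Rightarrow> real \<Rightarrow> real \<Rightarrow> (real \<Rightarrow> real) \<Rightarrow> (real \<times> real) set" where
  "region x0 y0 a h = {(x, y). y0 \<le> y \<and> y \<le> h x \<and> x0 \<le> x \<and> x \<le> x0 + a}"

text \<open>The set {x in dom: h0 x >= y}; h0^{-1}(y) is its supremum, defined when nonempty.\<close>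
definition inv_set :: "real \<Rightarrow> real \<Rightarrow> (real \<Rightarrow> real) \<Rightarrow> ereal \<Rightarrow> real set" where
  "inv_set x0 a h0 y = {x \<in> {x0..x0 + a}. y \<le> ereal (h0 x)}"

definition gen_inv :: "real \<Rightarrow> real \<Rightarrow> (real \<Rightarrow> real) \<Rightarrow> ereal \<Rightarrow> real" where
  "gen_inv x0 a h0 y = Sup (inv_set x0 a h0 y)"

definition cand_points ::
  "real \<Rightarrow> real \<Rightarrow> (real \<Rightarrow> real) \<Rightarrow> nat \<Rightarrow> (nat \<Rightarrow> real) \<Rightarrow> (nat \<Rightarrow> ereal)
    \<Rightarrow> (nat \<Rightarrow> real) \<Rightarrow> (nat \<Rightarrow> ereal) \<Rightarrow> real set" where
  "cand_points x0 a h0 n x1 x2 y1 y2 =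
     (\<Union>i\<in>{1..n}.
        {x1 i} \<union> {x. ereal x = x2 i}
        \<union> (if inv_set x0 a h0 (ereal (y1 i)) \<noteq> {} then {gen_inv x0 a h0 (ereal (y1 i))} else {})
        \<union> (if inv_set x0 a h0 (y2 i) \<noteq> {} then {gen_inv x0 a h0 (y2 i)} else {}))"

definition partition_pts ::
  "real \<Rightarrow> real \<Rightarrow> (real \<Rightarrow> real) \<Rightarrow> nat \<Rightarrow> (nat \<Rightarrow> real) \<Rightarrow> (nat \<Rightarrow> ereal)
    \<Rightarrow> (nat \<Rightarrow> real) \<Rightarrow> (nat \<Rightarrow> ereal) \<Rightarrow> real list" where
  "partition_pts x0 a h0 n x1 x2 y1 y2 =
     sorted_list_of_set ({x0, x0 + a} \<union> (cand_points x0 a h0 n x1 x2 y1 y2 \<inter> {x0<..<x0 + a}))"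

end

theory Submission
  imports Defs
begin

(* Cut [x0, x0 + a] at the partition points. Inside a cell no level y_1i or y_2i is crossed by
   h0, so by monotonicity and left-continuity h0 lies on one side of such a level on the whole
   cell, and by the sandwich condition (b) h lies on the same side. Truncating both functions
   between two such levels c <= C, their masses over a cell then either vanish, coincide
   pointwise, or both differ from the equal cell masses (a) by (c - y0) times the cell length.
   The x-extent of each rectangle within [x0, x0 + a] is a union of consecutive cells, so the
   measures agree; the whole region is the intersection with the rectangle [x0, oo] x [y0, oo]. *)

subsection \<open>Levels of antitone functions\<close>

lemma antitone_on_has_right_limit:
  fixes g :: "real \<Rightarrow> real"
  assumes anti: "\<forall>x\<in>{l..u}. \<forall>x'\<in>{l..u}. x \<le> x' \<longrightarrow> g x' \<le> g x"
    and p: "l \<le> p" "p < u"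
  shows "\<exists>L. (g \<longlongrightarrow> L) (at_right p)"
proof -
  have "((\<lambda>x. - g x) \<longlongrightarrow> Inf ((\<lambda>x. - g x) ` ({p<..} \<inter> {p<..u})))
      (at p within ({p<..} \<inter> {p<..u}))"
    by (rule Lim_right_bound[where K = "- g l"]) (use anti p in auto)
  moreover have "at p within ({p<..} \<inter> {p<..u}) = at_right p"
    by (rule at_within_nhd[where S = "{..<u}"]) (use p in auto)
  ultimately have "((\<lambda>x. - g x) \<longlongrightarrow> Inf ((\<lambda>x. - g x) ` ({p<..} \<inter> {p<..u}))) (at_right p)"
    by simp
  then show ?thesis using tendsto_minus by fastforce
qed

definition on_same_side :: "real set \<Rightarrow> (real \<Rightarrow> real) \<Rightarrow> (real \<Rightarrow> real) \<Rightarrow> real \<Rightarrow> bool" where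
  "on_same_side I g0 g y \<longleftrightarrow>
     (\<forall>x\<in>I. y \<le> g0 x \<and> y \<le> g x) \<or> (\<forall>x\<in>I. g0 x \<le> y \<and> g x \<le> y)"

lemma on_same_side_cong:
  assumes "\<forall>x\<in>I. g0' x = g0 x \<and> g' x = g x"
  shows "on_same_side I g0' g' y \<longleftrightarrow> on_same_side I g0 g y"
  using assms unfolding on_same_side_def by auto

lemma antitone_level_dichotomy:
  fixes h h0 :: "real \<Rightarrow> real"
  assumes h0_anti: "\<forall>x\<in>{x0..x0 + a}. \<forall>x'\<in>{x0..x0 + a}. x \<le> x' \<longrightarrow> h0 x' \<le> h0 x"
    and h0_lcont: "continuous (at_left q) h0"
    and pq: "x0 \<le> p" "p < q" "q \<le> x0 + a"
    and h_between: "\<forall>x\<in>{p<..q}. h0 q \<le> h x \<and> h x \<le> Lim (at_right p) h0"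
    and inv_outside: "inv_set x0 a h0 (ereal y) \<noteq> {} \<Longrightarrow>
      \<not> (p < gen_inv x0 a h0 (ereal y) \<and> gen_inv x0 a h0 (ereal y) < q)"
  shows "on_same_side {p<..q} h0 h y"
proof -
  define S where "S = inv_set x0 a h0 (ereal y)"
  have S: "S = {x \<in> {x0..x0 + a}. y \<le> h0 x}" unfolding S_def inv_set_def by simp
  have bdd: "bdd_above S" unfolding S by (rule bdd_aboveI[of _ "x0 + a"]) auto
  \<comment> \<open>Sup S is where h0 falls below y; by assumption it is not inside the open cell.\<close>
  show ?thesis
  proof (cases "S \<noteq> {} \<and> q \<le> Sup S")
    case True
    have above: "y \<le> h0 x" if "x0 \<le> x" "x < q" for x
    proof -
      have "x < Sup S" using True that by simp
      then obtain s where s: "s \<in> S" "x < s" using True less_cSup_iff[OF _ bdd] by blast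
      then have "x0 \<le> s" "s \<le> x0 + a" "y \<le> h0 s" unfolding S by auto
      moreover have "h0 s \<le> h0 x"
        using h0_anti[rule_format, of x s] that s(2) \<open>s \<le> x0 + a\<close> by simp
      ultimately show ?thesis by linarith
    qed
    have "eventually (\<lambda>x. y \<le> h0 x) (at_left q)"
      using eventually_at_left_real[OF le_less_trans[OF pq(1,2)]]
      by (rule eventually_mono) (auto intro: above)
    with h0_lcont have "y \<le> h0 q"
      by (intro tendsto_lowerbound[of h0 _ "at_left q"]) (auto simp: continuous_within)
    moreover have "h0 q \<le> h0 x" if "x \<in> {p<..q}" for x using h0_anti that pq by auto
    ultimately have "\<forall>x\<in>{p<..q}. y \<le> h0 x \<and> y \<le> h x"
      using h_between by (blast intro: order_trans)
    then show ?thesis unfolding on_same_side_def by blast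
  next
    case False
    have below: "h0 x < y" if x: "x \<in> {p<..q}" for x
    proof (rule ccontr)
      assume "\<not> h0 x < y"
      then have xS: "x \<in> S" unfolding S using x pq by auto
      then have "S \<noteq> {}" "Sup S < q" using False by auto
      then have "Sup S \<le> p" using inv_outside unfolding S_def gen_inv_def by force
      with cSup_upper[OF xS bdd] x show False by auto
    qed
    obtain L where L: "(h0 \<longlongrightarrow> L) (at_right p)"
      using antitone_on_has_right_limit[OF h0_anti] pq by fastforce
    have "L \<le> y"
    proof (rule tendsto_upperbound[OF L])
      show "eventually (\<lambda>x. h0 x \<le> y) (at_right p)"
        using eventually_at_right_real[OF pq(2)]
        by (rule eventually_mono) (use below in \<open>fastforce intro: less_imp_le\<close>)
    qed simp
    moreover have "Lim (at_right p) h0 = L" using L by (intro tendsto_Lim) auto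
    ultimately have "\<forall>x\<in>{p<..q}. h0 x \<le> y \<and> h x \<le> y"
      using below h_between by (blast intro: order_trans less_imp_le)
    then show ?thesis unfolding on_same_side_def by blast
  qed
qed

subsection \<open>Masses of hypographs\<close>

lemma nn_integral_indicator_Icc_Ioc:
  fixes f :: "real \<Rightarrow> ennreal"
  shows "(\<integral>\<^sup>+x. indicator {p..q} x * f x \<partial>lborel) = (\<integral>\<^sup>+x. indicator {p<..q} x * f x \<partial>lborel)"
  by (rule nn_integral_cong_AE)
    (use AE_lborel_singleton[of p] in \<open>eventually_elim, auto simp: indicator_def\<close>)

lemma emeasure_hypograph_strip:
  fixes g :: "real \<Rightarrow> real"
  assumes [measurable]: "g \<in> borel_measurable borel"
  shows "emeasure lborel {(x, y). l \<le> x \<and> x \<le> u \<and> c \<le> y \<and> y \<le> g x}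
       = (\<integral>\<^sup>+x. indicator {l..u} x * ennreal (g x - c) \<partial>lborel)"
proof -
  let ?S = "{(x, y). l \<le> x \<and> x \<le> u \<and> c \<le> y \<and> y \<le> g x}"
  have "{p \<in> space (borel \<Otimes>\<^sub>M borel). l \<le> fst p \<and> fst p \<le> u \<and> c \<le> snd p \<and> snd p \<le> g (fst p)}
      \<in> sets (borel \<Otimes>\<^sub>M (borel :: real measure))"
    by measurable
  moreover have "{p \<in> space (borel \<Otimes>\<^sub>M borel). l \<le> fst p \<and> fst p \<le> u \<and> c \<le> snd p \<and> snd p \<le> g (fst p)}
      = ?S"
    by (auto simp: space_pair_measure)
  ultimately have S: "?S \<in> sets (lborel \<Otimes>\<^sub>M lborel)"
    by (simp add: sets_pair_measure_cong[OF sets_lborel sets_lborel])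
  have slice: "Pair x -` ?S = (if l \<le> x \<and> x \<le> u then {c..g x} else {})" for x
    by auto
  have "emeasure lborel ?S = emeasure (lborel \<Otimes>\<^sub>M lborel) ?S" by (simp add: lborel_prod)
  also have "\<dots> = (\<integral>\<^sup>+x. emeasure lborel (Pair x -` ?S) \<partial>lborel)"
    by (rule lborel.emeasure_pair_measure_alt[OF S])
  also have "\<dots> = (\<integral>\<^sup>+x. indicator {l..u} x * ennreal (g x - c) \<partial>lborel)"
    unfolding slice by (intro nn_integral_cong) (auto simp: emeasure_lborel_Icc_eq ennreal_neg)
  finally show ?thesis .
qed

lemma borel_measurable_antitone_clamp:
  fixes g :: "real \<Rightarrow> real"
  assumes anti: "\<forall>x\<in>{l..u}. \<forall>x'\<in>{l..u}. x \<le> x' \<longrightarrow> g x' \<le> g x" and "l \<le> u"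
  shows "(\<lambda>x. g (max l (min u x))) \<in> borel_measurable borel"
proof -
  have "mono (\<lambda>x. - g (max l (min u x)))"
    by (rule monoI) (use anti \<open>l \<le> u\<close> in auto)
  then have "(\<lambda>x. - (- g (max l (min u x)))) \<in> borel_measurable borel"
    by (intro borel_measurable_uminus borel_measurable_mono)
  then show ?thesis by simp
qed

lemma nn_integral_Ioc_lift_level:
  fixes g :: "real \<Rightarrow> real"
  assumes [measurable]: "g \<in> borel_measurable borel"
    and "y0 \<le> c" "p \<le> q" and above: "\<forall>x\<in>{p<..q}. c \<le> g x"
  shows "(\<integral>\<^sup>+x. indicator {p<..q} x * ennreal (g x - y0) \<partial>lborel)
       = (\<integral>\<^sup>+x. indicator {p<..q} x * ennreal (g x - c) \<partial>lborel) + ennreal ((c - y0) * (q - p))"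
proof -
  have "indicator {p<..q} x * ennreal (g x - y0)
      = indicator {p<..q} x * ennreal (g x - c) + ennreal (c - y0) * indicator {p<..q} x" for x
    using above \<open>y0 \<le> c\<close> by (auto simp: indicator_def ennreal_plus[symmetric])
  then have "(\<integral>\<^sup>+x. indicator {p<..q} x * ennreal (g x - y0) \<partial>lborel)
      = (\<integral>\<^sup>+x. indicator {p<..q} x * ennreal (g x - c) \<partial>lborel)
        + (\<integral>\<^sup>+x. ennreal (c - y0) * indicator {p<..q} x \<partial>lborel)"
    by (simp add: nn_integral_add)
  also have "(\<integral>\<^sup>+x. ennreal (c - y0) * indicator {p<..q} x \<partial>lborel) = ennreal ((c - y0) * (q - p))"
    using assms(2,3) by (simp add: nn_integral_cmult_indicator ennreal_mult)
  finally show ?thesis .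
qed

lemma nn_integral_truncation_eq:
  fixes g g0 :: "real \<Rightarrow> real"
  assumes [measurable]: "g \<in> borel_measurable borel" "g0 \<in> borel_measurable borel"
    and "p \<le> q"
    and mass_eq: "(\<integral>\<^sup>+x. indicator {p<..q} x * ennreal (g x - y0) \<partial>lborel)
              = (\<integral>\<^sup>+x. indicator {p<..q} x * ennreal (g0 x - y0) \<partial>lborel)"
    and "y0 \<le> c"
    and c: "on_same_side {p<..q} g0 g c" and C: "on_same_side {p<..q} g0 g C"
  shows "(\<integral>\<^sup>+x. indicator {p<..q} x * ennreal (min (g x) C - c) \<partial>lborel)
       = (\<integral>\<^sup>+x. indicator {p<..q} x * ennreal (min (g0 x) C - c) \<partial>lborel)"
proof -
  let ?I = "\<lambda>f. \<integral>\<^sup>+x. indicator {p<..q} x * ennreal (f x) \<partial>lborel"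
  consider "\<forall>x\<in>{p<..q}. g0 x \<le> c \<and> g x \<le> c"
    | "\<forall>x\<in>{p<..q}. c \<le> g0 x \<and> c \<le> g x" "\<forall>x\<in>{p<..q}. C \<le> g0 x \<and> C \<le> g x"
    | "\<forall>x\<in>{p<..q}. c \<le> g0 x \<and> c \<le> g x" "\<forall>x\<in>{p<..q}. g0 x \<le> C \<and> g x \<le> C"
    using c C unfolding on_same_side_def by blast
  then show ?thesis
  proof cases
    case 1
    have "min (f x) C - c \<le> 0" if "f x \<le> c" for f and x :: real
      using that by linarith
    with 1 show ?thesis by (intro nn_integral_cong) (auto simp: indicator_def ennreal_neg)
  next
    case 2
    then show ?thesis by (intro nn_integral_cong) (auto simp: indicator_def)
  next
    case 3
    have trunc: "?I (\<lambda>x. min (f x) C - c) = ?I (\<lambda>x. f x - c)"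
      if "\<forall>x\<in>{p<..q}. f x \<le> C" for f
      using that by (intro nn_integral_cong) (auto simp: indicator_def)
    have "?I (\<lambda>x. g x - c) + ennreal ((c - y0) * (q - p)) = ?I (\<lambda>x. g0 x - c) + ennreal ((c - y0) * (q - p))"
      using mass_eq 3 nn_integral_Ioc_lift_level[of _ y0 c p q] assms(3,5) by simp
    then show ?thesis using 3 by (simp add: trunc ennreal_add_left_cancel)
  qed
qed

lemma nn_integral_Ioc_split:
  fixes f :: "real \<Rightarrow> ennreal"
  assumes [measurable]: "f \<in> borel_measurable borel" and "p \<le> q" "q \<le> r"
  shows "(\<integral>\<^sup>+x. indicator {p<..r} x * f x \<partial>lborel)
       = (\<integral>\<^sup>+x. indicator {p<..q} x * f x \<partial>lborel) + (\<integral>\<^sup>+x. indicator {q<..r} x * f x \<partial>lborel)"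
proof -
  have "indicator {p<..r} x * f x = indicator {p<..q} x * f x + indicator {q<..r} x * f x" for x
    using assms(2,3) by (auto simp: indicator_def)
  then show ?thesis by (simp add: nn_integral_add)
qed

lemma nn_integral_Ioc_telescope:
  fixes f f0 :: "real \<Rightarrow> ennreal"
  assumes [measurable]: "f \<in> borel_measurable borel" "f0 \<in> borel_measurable borel"
    and sorted: "sorted_wrt (<) xs"
    and cell: "\<And>k. Suc k < length xs \<Longrightarrow>
      (\<integral>\<^sup>+x. indicator {xs!k<..xs!Suc k} x * f x \<partial>lborel)
        = (\<integral>\<^sup>+x. indicator {xs!k<..xs!Suc k} x * f0 x \<partial>lborel)"
    and "i \<le> j" "j < length xs"
  shows "(\<integral>\<^sup>+x. indicator {xs!i<..xs!j} x * f x \<partial>lborel)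
       = (\<integral>\<^sup>+x. indicator {xs!i<..xs!j} x * f0 x \<partial>lborel)"
  using assms(5,6)
proof (induction j)
  case (Suc j)
  show ?case
  proof (cases "i = Suc j")
    case False
    then have ij: "i \<le> j" and len: "Suc j < length xs" using Suc.prems by auto
    have "xs!i \<le> xs!j"
      using sorted_wrt_nth_less[OF sorted, of i j] ij len by (cases "i = j") auto
    moreover have "xs!j \<le> xs!Suc j"
      using sorted_wrt_nth_less[OF sorted, of j "Suc j"] len by simp
    ultimately show ?thesis
      using nn_integral_Ioc_split[of f "xs!i" "xs!j" "xs!Suc j"]
        nn_integral_Ioc_split[of f0 "xs!i" "xs!j" "xs!Suc j"] Suc.IH[OF ij] len cell[OF len]
      by simp
  qed simp
qed simp

lemma nn_integral_antitone_eq_integral: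
  fixes g :: "real \<Rightarrow> real"
  assumes anti: "\<forall>x\<in>{p..q}. \<forall>x'\<in>{p..q}. x \<le> x' \<longrightarrow> g x' \<le> g x"
    and above: "\<forall>x\<in>{p..q}. c \<le> g x"
  shows "(\<integral>\<^sup>+x. indicator {p..q} x * ennreal (g x - c) \<partial>lborel)
       = ennreal (integral {p..q} (\<lambda>x. g x - c))"
proof -
  have "mono_on {p..q} (\<lambda>x. - g x)" using anti by (auto simp: mono_on_def)
  then have "(\<lambda>x. - g x) integrable_on {p..q}" by (rule integrable_on_mono_on)
  then have "(\<lambda>x. g x - c) integrable_on {p..q}"
    by (intro integrable_diff) (auto simp: integrable_neg_iff)
  then have "((\<lambda>x. g x - c) has_integral integral {p..q} (\<lambda>x. g x - c)) {p..q}"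
    by (simp add: integrable_integral)
  with above have "(\<integral>\<^sup>+x. ennreal (g x - c) * indicator {p..q} x \<partial>lborel)
      = ennreal (integral {p..q} (\<lambda>x. g x - c))"
    by (intro nn_integral_has_integral_lebesgue') auto
  then show ?thesis by (simp add: mult.commute)
qed

lemma le_real_of_ereal_min_iff:
  assumes "ereal r \<le> z"
  shows "x \<le> real_of_ereal (min (ereal u) z) \<longleftrightarrow> x \<le> u \<and> ereal x \<le> z"
  using assms by (cases z) (auto simp: min_def)

lemma rect_Int_region:
  fixes g G :: "real \<Rightarrow> real"
  assumes "x0 \<le> x1" "ereal x1 \<le> x2" "y0 \<le> y1" "ereal y1 \<le> y2"
    and G: "\<forall>x\<in>{x0..x0 + a}. G x = g x \<and> g x \<le> y0 + b"
  shows "rect x1 x2 y1 y2 \<inter> region x0 y0 a g =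
    {(x, y). x1 \<le> x \<and> x \<le> real_of_ereal (min (ereal (x0 + a)) x2)
      \<and> y1 \<le> y \<and> y \<le> min (G x) (real_of_ereal (min (ereal (y0 + b)) y2))}"
proof -
  have "(x, y) \<in> rect x1 x2 y1 y2 \<inter> region x0 y0 a g \<longleftrightarrow>
    x1 \<le> x \<and> x \<le> real_of_ereal (min (ereal (x0 + a)) x2)
      \<and> y1 \<le> y \<and> y \<le> min (G x) (real_of_ereal (min (ereal (y0 + b)) y2))" for x y
  proof (cases "x0 \<le> x \<and> x \<le> x0 + a")
    case True
    then have "G x = g x" "g x \<le> y0 + b" using G by auto
    with True show ?thesis using assms(1,3)
      by (auto simp: rect_def region_def le_real_of_ereal_min_iff[OF assms(2)]
          le_real_of_ereal_min_iff[OF assms(4)])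
  next
    case False
    then have "\<not> (x1 \<le> x \<and> x \<le> real_of_ereal (min (ereal (x0 + a)) x2))"
      using assms(1) le_real_of_ereal_min_iff[OF assms(2)] by auto
    moreover have "(x, y) \<notin> region x0 y0 a g" using False by (simp add: region_def)
    ultimately show ?thesis by blast
  qed
  then show ?thesis by auto
qed

lemma OU_X_region:
  assumes "0 \<le> a" "\<forall>x\<in>{x0..x0 + a}. y0 \<le> g x"
  shows "OU_X x0 y0 (region x0 y0 a g) = ereal a"
proof -
  have "{x. (x, y0) \<in> region x0 y0 a g} = {x0..x0 + a}"
    using assms(2) unfolding region_def by auto
  moreover have "Sup (ereal ` {x0..x0 + a}) = ereal (x0 + a)"
    by (rule antisym) (use assms(1) in \<open>auto intro: Sup_upper Sup_least\<close>)
  ultimately show ?thesis unfolding OU_X_def by simp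
qed

lemma OU_Y_region:
  assumes "0 \<le> a" "y0 \<le> g x0"
  shows "OU_Y x0 y0 (region x0 y0 a g) = ereal (g x0 - y0)"
proof -
  have "{y. (x0, y) \<in> region x0 y0 a g} = {y0..g x0}"
    using assms(1) unfolding region_def by auto
  moreover have "Sup (ereal ` {y0..g x0}) = ereal (g x0)"
    by (rule antisym) (use assms(2) in \<open>auto intro: Sup_upper Sup_least\<close>)
  ultimately show ?thesis unfolding OU_Y_def by simp
qed

subsection \<open>Partition points\<close>

lemma sorted_wrt_less_not_between:
  fixes xs :: "'a::linorder list"
  assumes "sorted_wrt (<) xs" "Suc k < length xs" "z \<in> set xs"
  shows "\<not> (xs!k < z \<and> z < xs!Suc k)"
proof
  assume z: "xs!k < z \<and> z < xs!Suc k"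
  obtain m where m: "m < length xs" "xs!m = z" using assms(3) by (auto simp: in_set_conv_nth)
  show False
  proof (cases "m \<le> k")
    case True
    then have "xs!m \<le> xs!k" using sorted_wrt_nth_less[OF assms(1), of m k] assms(2)
      by (cases "m = k") auto
    then show False using m z by (simp add: leD)
  next
    case False
    then have "xs!Suc k \<le> xs!m" using sorted_wrt_nth_less[OF assms(1), of "Suc k" m] m
      by (cases "m = Suc k") auto
    then show False using m z by (simp add: leD)
  qed
qed

lemma sorted_wrt_less_indices:
  fixes xs :: "'a::linorder list"
  assumes "sorted_wrt (<) xs" "l \<in> set xs" "u \<in> set xs" "l < u"
  obtains i j where "i \<le> j" "j < length xs" "xs!i = l" "xs!j = u"
proof -
  obtain i j where ij: "i < length xs" "xs!i = l" "j < length xs" "xs!j = u"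
    using assms(2,3) by (auto simp: in_set_conv_nth)
  have "i \<le> j"
  proof (rule ccontr)
    assume "\<not> i \<le> j"
    then have "xs!j < xs!i" using sorted_wrt_nth_less[OF assms(1), of j i] ij by simp
    then show False using ij assms(4) by simp
  qed
  with ij show thesis using that by blast
qed

lemma finite_cand_points: "finite (cand_points x0 a h0 n x1 x2 y1 y2)"
proof -
  have "{x. ereal x = x2 i} \<subseteq> {real_of_ereal (x2 i)}" for i by (auto dest: sym)
  then have "finite {x. ereal x = x2 i}" for i by (rule finite_subset) simp
  then show ?thesis unfolding cand_points_def by auto
qed

lemma set_partition_pts:
  "set (partition_pts x0 a h0 n x1 x2 y1 y2)
     = {x0, x0 + a} \<union> (cand_points x0 a h0 n x1 x2 y1 y2 \<inter> {x0<..<x0 + a})"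
  unfolding partition_pts_def by (rule set_sorted_list_of_set) (simp add: finite_cand_points)

lemma sorted_partition_pts: "sorted_wrt (<) (partition_pts x0 a h0 n x1 x2 y1 y2)"
  unfolding partition_pts_def by (simp add: strict_sorted_list_of_set)

lemma partition_pts_rect_corners:
  assumes xs: "xs = partition_pts x0 a h0 n x1 x2 y1 y2" and i: "i \<in> {1..n}"
    and x: "x0 \<le> x1 i" "ereal (x1 i) \<le> x2 i"
  shows "x1 i \<in> set xs \<or> x0 + a \<le> x1 i"
    and "real_of_ereal (min (ereal (x0 + a)) (x2 i)) \<in> set xs"
proof -
  let ?C = "cand_points x0 a h0 n x1 x2 y1 y2"
  have "x1 i \<in> ?C" unfolding cand_points_def by (rule UN_I[OF i]) simp
  then show "x1 i \<in> set xs \<or> x0 + a \<le> x1 i"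
    using x(1) unfolding xs set_partition_pts by auto
  show "real_of_ereal (min (ereal (x0 + a)) (x2 i)) \<in> set xs"
  proof (cases "x2 i")
    case (real r)
    then have "r \<in> ?C" unfolding cand_points_def by (intro UN_I[OF i]) simp
    moreover have "x0 \<le> r" using x real by simp
    ultimately show ?thesis using real unfolding xs set_partition_pts by (auto simp: min_def)
  qed (use x(2) in \<open>auto simp: xs set_partition_pts\<close>)
qed

lemma on_same_side_partition_cells:
  fixes h h0 :: "real \<Rightarrow> real"
  assumes xs: "xs = partition_pts x0 a h0 n x1 x2 y1 y2" and "0 \<le> a"
    and h0_anti: "\<forall>x\<in>{x0..x0 + a}. \<forall>x'\<in>{x0..x0 + a}. x \<le> x' \<longrightarrow> h0 x' \<le> h0 x"
    and h0_lcont: "\<forall>x\<in>{x0<..x0 + a}. continuous (at_left x) h0"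
    and h_between: "\<forall>i. Suc i < length xs \<longrightarrow> (\<forall>x\<in>{xs ! i<..xs ! Suc i}.
        h0 (xs ! Suc i) \<le> h x \<and> h x \<le> Lim (at_right (xs ! i)) h0)"
    and i: "i \<in> {1..n}" and y: "y = y1 i \<or> ereal y = y2 i"
  shows "\<forall>k. Suc k < length xs \<longrightarrow> on_same_side {xs!k<..xs!Suc k} h0 h y"
proof (intro allI impI antitone_level_dichotomy[OF h0_anti])
  fix k assume k: "Suc k < length xs"
  have sorted: "sorted_wrt (<) xs" unfolding xs by (rule sorted_partition_pts)
  have "xs!k \<in> set xs" "xs!Suc k \<in> set xs" using k by simp_all
  then show dom: "x0 \<le> xs!k" "xs!k < xs!Suc k" "xs!Suc k \<le> x0 + a"
    using \<open>0 \<le> a\<close> sorted_wrt_nth_less[OF sorted, of k "Suc k"] k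
    unfolding xs set_partition_pts by auto
  then show "continuous (at_left (xs!Suc k)) h0" using h0_lcont by simp
  show "\<forall>x\<in>{xs!k<..xs!Suc k}. h0 (xs!Suc k) \<le> h x \<and> h x \<le> Lim (at_right (xs!k)) h0"
    using h_between k by blast
  assume "inv_set x0 a h0 (ereal y) \<noteq> {}"
  then have "gen_inv x0 a h0 (ereal y) \<in> cand_points x0 a h0 n x1 x2 y1 y2"
    unfolding cand_points_def using y by (intro UN_I[OF i]) auto
  then have "gen_inv x0 a h0 (ereal y) \<in> set xs
      \<or> \<not> (x0 < gen_inv x0 a h0 (ereal y) \<and> gen_inv x0 a h0 (ereal y) < x0 + a)"
    unfolding xs set_partition_pts by auto
  then show "\<not> (xs!k < gen_inv x0 a h0 (ereal y) \<and> gen_inv x0 a h0 (ereal y) < xs!Suc k)"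
    using sorted_wrt_less_not_between[OF sorted k] dom by fastforce
qed

subsection \<open>Profiles with equal masses on the cells\<close>

locale cellwise_matched =
  fixes x0 y0 a b :: real and h0 h :: "real \<Rightarrow> real" and xs :: "real list"
  assumes a_nonneg: "0 \<le> a"
    and h0_range: "\<forall>x\<in>{x0..x0 + a}. h0 x \<in> {y0..y0 + b}"
    and h_range: "\<forall>x\<in>{x0..x0 + a}. h x \<in> {y0..y0 + b}"
    and h0_anti: "\<forall>x\<in>{x0..x0 + a}. \<forall>x'\<in>{x0..x0 + a}. x \<le> x' \<longrightarrow> h0 x' \<le> h0 x"
    and h_anti: "\<forall>x\<in>{x0..x0 + a}. \<forall>x'\<in>{x0..x0 + a}. x \<le> x' \<longrightarrow> h x' \<le> h x"
    and xs_sorted: "sorted_wrt (<) xs"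
    and xs_subset: "set xs \<subseteq> {x0..x0 + a}"
    and cell_mass: "\<forall>k. Suc k < length xs \<longrightarrow>
      integral {xs!k..xs!Suc k} (\<lambda>x. h x - y0)
        = measure lborel ({(x, y). xs!k \<le> x \<and> x \<le> xs!Suc k \<and> y0 \<le> y} \<inter> region x0 y0 a h0)"
begin

definition extend :: "(real \<Rightarrow> real) \<Rightarrow> real \<Rightarrow> real" where
  "extend g x = g (max x0 (min (x0 + a) x))"

lemma extend_eq: "x0 \<le> x \<Longrightarrow> x \<le> x0 + a \<Longrightarrow> extend g x = g x"
  unfolding extend_def by simp

lemma borel_measurable_extend [measurable]:
  "extend h \<in> borel_measurable borel" "extend h0 \<in> borel_measurable borel"
  unfolding extend_def[abs_def]
  using borel_measurable_antitone_clamp[OF h_anti] borel_measurable_antitone_clamp[OF h0_anti] a_nonneg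
  by simp_all

lemma cell_bounds:
  assumes "Suc k < length xs"
  shows "x0 \<le> xs!k" "xs!k < xs!Suc k" "xs!Suc k \<le> x0 + a"
proof -
  have "xs!k \<in> set xs" "xs!Suc k \<in> set xs" using assms by simp_all
  then show "x0 \<le> xs!k" "xs!Suc k \<le> x0 + a" using xs_subset by auto
  show "xs!k < xs!Suc k" using sorted_wrt_nth_less[OF xs_sorted, of k "Suc k"] assms by simp
qed

lemma nn_integral_extend_eq_integral:
  assumes "x0 \<le> p" "q \<le> x0 + a" and g: "g = h \<or> g = h0"
  shows "(\<integral>\<^sup>+x. indicator {p..q} x * ennreal (extend g x - y0) \<partial>lborel)
       = ennreal (integral {p..q} (\<lambda>x. g x - y0))"
proof -
  have "(\<integral>\<^sup>+x. indicator {p..q} x * ennreal (extend g x - y0) \<partial>lborel)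
      = (\<integral>\<^sup>+x. indicator {p..q} x * ennreal (g x - y0) \<partial>lborel)"
    using assms(1,2) by (intro nn_integral_cong) (auto simp: indicator_def extend_eq)
  also have "\<dots> = ennreal (integral {p..q} (\<lambda>x. g x - y0))"
    by (rule nn_integral_antitone_eq_integral) (use g h_anti h0_anti h_range h0_range assms(1,2) in auto)
  finally show ?thesis .
qed

lemma cell_nn_integral_eq:
  assumes k: "Suc k < length xs"
  shows "(\<integral>\<^sup>+x. indicator {xs!k<..xs!Suc k} x * ennreal (extend h x - y0) \<partial>lborel)
       = (\<integral>\<^sup>+x. indicator {xs!k<..xs!Suc k} x * ennreal (extend h0 x - y0) \<partial>lborel)"
proof -
  define p q where "p = xs!k" and "q = xs!Suc k"
  define S where "S = {(x, y). p \<le> x \<and> x \<le> q \<and> y0 \<le> y} \<inter> region x0 y0 a h0"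
  have pq: "x0 \<le> p" "p < q" "q \<le> x0 + a" using cell_bounds[OF k] unfolding p_def q_def by auto
  have "S = {(x, y). p \<le> x \<and> x \<le> q \<and> y0 \<le> y \<and> y \<le> extend h0 x}"
    using pq by (auto simp: S_def region_def extend_eq)
  then have S: "emeasure lborel S = ennreal (integral {p..q} (\<lambda>x. h0 x - y0))"
    using pq by (simp add: emeasure_hypograph_strip nn_integral_extend_eq_integral)
  have "ennreal (integral {p..q} (\<lambda>x. h x - y0)) = ennreal (measure lborel S)"
    using cell_mass k unfolding p_def q_def S_def by simp
  also have "\<dots> = emeasure lborel S"
    using S by (intro emeasure_eq_ennreal_measure[symmetric]) simp
  finally have "ennreal (integral {p..q} (\<lambda>x. h x - y0)) = ennreal (integral {p..q} (\<lambda>x. h0 x - y0))"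
    using S by simp
  moreover have "(\<integral>\<^sup>+x. indicator {p<..q} x * ennreal (extend g x - y0) \<partial>lborel)
      = ennreal (integral {p..q} (\<lambda>x. g x - y0))" if "g = h \<or> g = h0" for g
    using nn_integral_extend_eq_integral[OF pq(1,3) that] by (simp add: nn_integral_indicator_Icc_Ioc)
  ultimately show ?thesis unfolding p_def q_def by simp
qed

lemma on_same_side_top:
  assumes "y0 + b \<le> y" "Suc k < length xs"
  shows "on_same_side {xs!k<..xs!Suc k} h0 h y"
proof -
  have "h0 x \<le> y \<and> h x \<le> y" if "x \<in> {xs!k<..xs!Suc k}" for x
  proof -
    have "x \<in> {x0..x0 + a}" using that cell_bounds[OF assms(2)] by auto
    then show ?thesis using h_range h0_range assms(1) by fastforce
  qed
  then show ?thesis unfolding on_same_side_def by blast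
qed

lemma truncated_nn_integral_eq:
  assumes "y0 \<le> c"
    and c: "\<forall>k. Suc k < length xs \<longrightarrow> on_same_side {xs!k<..xs!Suc k} h0 h c"
    and C: "\<forall>k. Suc k < length xs \<longrightarrow> on_same_side {xs!k<..xs!Suc k} h0 h C"
    and "i \<le> j" "j < length xs"
  shows "(\<integral>\<^sup>+x. indicator {xs!i<..xs!j} x * ennreal (min (extend h x) C - c) \<partial>lborel)
       = (\<integral>\<^sup>+x. indicator {xs!i<..xs!j} x * ennreal (min (extend h0 x) C - c) \<partial>lborel)"
proof (rule nn_integral_Ioc_telescope[OF _ _ xs_sorted _ assms(4,5)])
  fix k assume k: "Suc k < length xs"
  have "\<forall>x\<in>{xs!k<..xs!Suc k}. extend h0 x = h0 x \<and> extend h x = h x"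
    using cell_bounds[OF k] by (auto simp: extend_eq)
  then have "on_same_side {xs!k<..xs!Suc k} (extend h0) (extend h) y
      \<longleftrightarrow> on_same_side {xs!k<..xs!Suc k} h0 h y" for y
    by (rule on_same_side_cong)
  with c C k have "on_same_side {xs!k<..xs!Suc k} (extend h0) (extend h) c"
      "on_same_side {xs!k<..xs!Suc k} (extend h0) (extend h) C"
    by simp_all
  with cell_bounds[OF k] show "(\<integral>\<^sup>+x. indicator {xs!k<..xs!Suc k} x * ennreal (min (extend h x) C - c) \<partial>lborel)
      = (\<integral>\<^sup>+x. indicator {xs!k<..xs!Suc k} x * ennreal (min (extend h0 x) C - c) \<partial>lborel)"
    by (intro nn_integral_truncation_eq[OF _ _ _ cell_nn_integral_eq[OF k] \<open>y0 \<le> c\<close>]) simp_all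
qed simp_all

lemma emeasure_rect_Int_region:
  assumes rect: "x0 \<le> x1" "ereal x1 \<le> x2" "y0 \<le> y1" "ereal y1 \<le> y2" and g: "g = h \<or> g = h0"
  shows "emeasure lborel (rect x1 x2 y1 y2 \<inter> region x0 y0 a g)
    = (\<integral>\<^sup>+x. indicator {x1<..real_of_ereal (min (ereal (x0 + a)) x2)} x
          * ennreal (min (extend g x) (real_of_ereal (min (ereal (y0 + b)) y2)) - y1) \<partial>lborel)"
proof -
  have G: "\<forall>x\<in>{x0..x0 + a}. extend g x = g x \<and> g x \<le> y0 + b"
    using g h_range h0_range by (auto simp: extend_eq)
  have meas: "(\<lambda>x. min (extend g x) (real_of_ereal (min (ereal (y0 + b)) y2))) \<in> borel_measurable borel"
    using g by auto
  show ?thesis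
    unfolding rect_Int_region[OF rect(1-4) G] emeasure_hypograph_strip[OF meas]
    by (rule nn_integral_indicator_Icc_Ioc)
qed

lemma emeasure_rect_Int_region_eq:
  assumes rect: "x0 \<le> x1" "ereal x1 \<le> x2" "y0 \<le> y1" "ereal y1 \<le> y2"
    and x1: "x1 \<in> set xs \<or> x0 + a \<le> x1"
    and x2: "real_of_ereal (min (ereal (x0 + a)) x2) \<in> set xs"
    and y1: "\<forall>k. Suc k < length xs \<longrightarrow> on_same_side {xs!k<..xs!Suc k} h0 h y1"
    and y2: "\<And>Y. y2 = ereal Y \<Longrightarrow> \<forall>k. Suc k < length xs \<longrightarrow> on_same_side {xs!k<..xs!Suc k} h0 h Y"
  shows "emeasure lborel (rect x1 x2 y1 y2 \<inter> region x0 y0 a h)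
       = emeasure lborel (rect x1 x2 y1 y2 \<inter> region x0 y0 a h0)"
proof -
  define U where "U = real_of_ereal (min (ereal (x0 + a)) x2)"
  define Y where "Y = real_of_ereal (min (ereal (y0 + b)) y2)"
  have Y: "\<forall>k. Suc k < length xs \<longrightarrow> on_same_side {xs!k<..xs!Suc k} h0 h Y"
  proof (cases "y2 < ereal (y0 + b)")
    case True
    with rect(4) obtain Y' where "y2 = ereal Y'" by (cases y2) auto
    moreover from True have "Y = real_of_ereal y2" unfolding Y_def by simp
    ultimately show ?thesis using y2 by simp
  next
    case False
    then have "ereal (y0 + b) \<le> y2" by simp
    then have "Y = y0 + b" unfolding Y_def by (simp add: min_absorb1)
    then show ?thesis using on_same_side_top by simp
  qed
  show ?thesis
  proof (cases "x1 < U")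
    case True
    then have "x1 \<in> set xs" using x1 x2 xs_subset unfolding U_def by auto
    then obtain i j where ij: "i \<le> j" "j < length xs" and "xs!i = x1" "xs!j = U"
      using sorted_wrt_less_indices[OF xs_sorted _ x2[folded U_def] True] by blast
    then show ?thesis
      using truncated_nn_integral_eq[OF rect(3) y1 Y ij]
      by (simp add: emeasure_rect_Int_region[OF rect, folded U_def Y_def])
  qed (simp add: emeasure_rect_Int_region[OF rect] U_def)
qed

lemma emeasure_region_eq:
  assumes "x0 \<in> set xs" "x0 + a \<in> set xs"
  shows "emeasure lborel (region x0 y0 a h) = emeasure lborel (region x0 y0 a h0)"
proof -
  have "region x0 y0 a g = rect x0 \<infinity> y0 \<infinity> \<inter> region x0 y0 a g" for g
    unfolding rect_def region_def by auto
  moreover have "\<forall>k. Suc k < length xs \<longrightarrow> on_same_side {xs!k<..xs!Suc k} h0 h y0"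
    using cell_bounds h_range h0_range unfolding on_same_side_def by fastforce
  ultimately show ?thesis
    using emeasure_rect_Int_region_eq[of x0 \<infinity> y0 \<infinity>] assms by simp
qed

end

theorem mainTheorem6:
  fixes x0 y0 a b :: real
    and R0 :: "(real \<times> real) set"
    and h0 h :: "real \<Rightarrow> real"
    and n :: nat
    and x1 y1 :: "nat \<Rightarrow> real" and x2 y2 :: "nat \<Rightarrow> ereal"
  defines "xs \<equiv> partition_pts x0 a h0 n x1 x2 y1 y2"
  assumes R0_closed: "closed R0"
    and R0_OU: "is_OU x0 y0 R0"
    and R0_meas: "0 < emeasure lborel R0" "emeasure lborel R0 < \<infinity>"
    and R0_X: "OU_X x0 y0 R0 = ereal a" "0 < a"
    and R0_Y: "OU_Y x0 y0 R0 = ereal b" "0 < b"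
    and R0_eq: "R0 = region x0 y0 a h0"
    and h0_range: "\<forall>x\<in>{x0..x0 + a}. h0 x \<in> {y0..y0 + b}"
    and h0_mono: "\<forall>x\<in>{x0..x0 + a}. \<forall>x'\<in>{x0..x0 + a}. x \<le> x' \<longrightarrow> h0 x' \<le> h0 x"
    and h0_lcont: "\<forall>x\<in>{x0<..x0 + a}. continuous (at_left x) h0"
    and h0_x0: "h0 x0 = y0 + b"
    and rects: "\<forall>i\<in>{1..n}. x0 \<le> x1 i \<and> ereal (x1 i) \<le> x2 i \<and> y0 \<le> y1 i \<and> ereal (y1 i) \<le> y2 i"
    and h_range: "\<forall>x\<in>{x0..x0 + a}. h x \<in> {y0..y0 + b}"
    and h_int: "\<forall>i. Suc i < length xs \<longrightarrow>
        integral {xs ! i..xs ! Suc i} (\<lambda>x. h x - y0)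
          = measure lborel ({(x, y). xs ! i \<le> x \<and> x \<le> xs ! Suc i \<and> y0 \<le> y} \<inter> R0)"
    and h_bounds: "\<forall>i. Suc i < length xs \<longrightarrow> (\<forall>x\<in>{xs ! i<..xs ! Suc i}.
        h0 (xs ! Suc i) \<le> h x \<and> h x \<le> Lim (at_right (xs ! i)) h0)"
    and h_mono: "\<forall>x\<in>{x0..x0 + a}. \<forall>x'\<in>{x0..x0 + a}. x \<le> x' \<longrightarrow> h x' \<le> h x"
    and h_lcont: "\<forall>x\<in>{x0<..x0 + a}. continuous (at_left x) h"
    and h_x0: "(h \<longlongrightarrow> h x0) (at_right x0)"
  shows "emeasure lborel (region x0 y0 a h) = emeasure lborel R0
    \<and> OU_X x0 y0 (region x0 y0 a h) \<le> OU_X x0 y0 R0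
    \<and> OU_Y x0 y0 (region x0 y0 a h) \<le> OU_Y x0 y0 R0
    \<and> (\<forall>i\<in>{1..n}. emeasure lborel (rect (x1 i) (x2 i) (y1 i) (y2 i) \<inter> region x0 y0 a h)
                 = emeasure lborel (rect (x1 i) (x2 i) (y1 i) (y2 i) \<inter> R0))"
proof -
  have xs: "xs = partition_pts x0 a h0 n x1 x2 y1 y2" by (simp add: xs_def)
  have a0: "0 \<le> a" using R0_X by simp
  interpret cellwise_matched x0 y0 a b h0 h xs
    using a0 h0_range h_range h0_mono h_mono h_int sorted_partition_pts
    by unfold_locales (auto simp: xs set_partition_pts R0_eq)
  have levels: "\<forall>k. Suc k < length xs \<longrightarrow> on_same_side {xs!k<..xs!Suc k} h0 h y"
    if "i \<in> {1..n}" "y = y1 i \<or> ereal y = y2 i" for i y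
    by (rule on_same_side_partition_cells[OF xs a0 h0_mono h0_lcont h_bounds that])
  have "emeasure lborel (rect (x1 i) (x2 i) (y1 i) (y2 i) \<inter> region x0 y0 a h)
      = emeasure lborel (rect (x1 i) (x2 i) (y1 i) (y2 i) \<inter> R0)" if i: "i \<in> {1..n}" for i
  proof -
    have "x0 \<le> x1 i" "ereal (x1 i) \<le> x2 i" "y0 \<le> y1 i" "ereal (y1 i) \<le> y2 i"
      using rects i by auto
    then show ?thesis unfolding R0_eq
      using partition_pts_rect_corners[OF xs i] levels[OF i]
      by (intro emeasure_rect_Int_region_eq) auto
  qed
  moreover have "emeasure lborel (region x0 y0 a h) = emeasure lborel R0"
    unfolding R0_eq by (rule emeasure_region_eq) (auto simp: xs set_partition_pts)
  moreover have "OU_X x0 y0 (region x0 y0 a h) = OU_X x0 y0 R0"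
    using OU_X_region[OF a0] h_range R0_X by simp
  moreover have "OU_Y x0 y0 (region x0 y0 a h) \<le> OU_Y x0 y0 R0"
    using OU_Y_region[OF a0, of y0 h] h_range[rule_format, of x0] a0 R0_Y by simp
  ultimately show ?thesis by auto
qed

end
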